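(* Let $D$ be a digraph of order $n$ and $2\le k\le n$. Then $\lambda_k(D)\le \lambda(D)$. Moreover, the bound is sharp.
   Context: Digraphs are finite, without loops or parallel arcs. $\lambda(D)$ is the arc-strong connectivity of $D$ (the minimum number of arcs whose deletion leaves a non-strong digraph). For $S\subseteq V(D)$, $\lambda_S(D)$ is the maximum number of pairwise arc-disjoint strong subgraphs of $D$ containing $S$, and $\lambda_k(D)=\min\{\lambda_S(D): S\subseteq V(D), |S|=k\}$. *)

theory Defs
  imports Main
begin

text \<open>A digraph is a pair (V, A): finite vertex set V, arc set A \<subseteq> V \<times> V,
  no loops (parallel arcs are impossible since A is a set).\<close>

definition digraph :: "'a set \<Rightarrow> ('a \<times> 'a) set \<Rightarrow> bool" where
  "digraph V A \<longleftrightarrow> finite V \<and> A \<subseteq> V \<times> V \<and> (\<forall>v. (v, v) \<notin> A)"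

definition strong :: "'a set \<Rightarrow> ('a \<times> 'a) set \<Rightarrow> bool" where
  "strong V A \<longleftrightarrow> (\<forall>u\<in>V. \<forall>v\<in>V. (u, v) \<in> A\<^sup>*)"

definition arc_strong_conn :: "'a set \<Rightarrow> ('a \<times> 'a) set \<Rightarrow> nat" where
  "arc_strong_conn V A = Min {card F | F. F \<subseteq> A \<and> \<not> strong V (A - F)}"

definition strong_subgraph_containing ::
  "'a set \<Rightarrow> ('a \<times> 'a) set \<Rightarrow> 'a set \<Rightarrow> 'a set \<Rightarrow> ('a \<times> 'a) set \<Rightarrow> bool" where
  "strong_subgraph_containing V A S W B \<longleftrightarrow>
     W \<subseteq> V \<and> B \<subseteq> A \<and> B \<subseteq> W \<times> W \<and> S \<subseteq> W \<and> strong W B"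

definition lambda_S :: "'a set \<Rightarrow> ('a \<times> 'a) set \<Rightarrow> 'a set \<Rightarrow> nat" where
  "lambda_S V A S = Max {m. \<exists>H :: nat \<Rightarrow> 'a set \<times> ('a \<times> 'a) set.
      (\<forall>i<m. strong_subgraph_containing V A S (fst (H i)) (snd (H i))) \<and>
      (\<forall>i<m. \<forall>j<m. i \<noteq> j \<longrightarrow> snd (H i) \<inter> snd (H j) = {})}"

definition lambda_k :: "'a set \<Rightarrow> ('a \<times> 'a) set \<Rightarrow> nat \<Rightarrow> nat" where
  "lambda_k V A k = Min {lambda_S V A S | S. S \<subseteq> V \<and> card S = k}"

end

theory Submission
  imports Defs
begin

text \<open>If deleting a minimum arc set F separates x from y, extend {x, y} to a k-set S: every strong
  subgraph containing S must use an arc of F, so arc-disjoint ones number at most |F| = \<lambda>(D).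
  Equality holds for the directed n-cycle: removing one arc destroys strong connectivity, while
  the cycle itself is a strong subgraph containing every S, so \<lambda>(D) = \<lambda>_k(D) = 1.\<close>

lemma digraph_finite_arcs: "digraph V A \<Longrightarrow> finite A"
  unfolding digraph_def by (meson finite_SigmaI finite_subset)

lemma card_ge_if_disjoint_family_meets:
  fixes B :: "nat \<Rightarrow> 'b set"
  assumes "finite X"
    and meets: "\<And>i. i < m \<Longrightarrow> B i \<inter> X \<noteq> {}"
    and disjoint: "\<And>i j. i < m \<Longrightarrow> j < m \<Longrightarrow> i \<noteq> j \<Longrightarrow> B i \<inter> B j = {}"
  shows "m \<le> card X"
proof -
  have "m = (\<Sum>i<m. 1::nat)" by simp
  also have "\<dots> \<le> (\<Sum>i<m. card (B i \<inter> X))"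
    using meets \<open>finite X\<close> by (intro sum_mono) (simp add: Suc_le_eq card_gt_0_iff)
  also have "\<dots> = card (\<Union>i<m. B i \<inter> X)"
    using \<open>finite X\<close> disjoint by (intro card_UN_disjoint[symmetric]) auto
  also have "\<dots> \<le> card X"
    using \<open>finite X\<close> by (intro card_mono) auto
  finally show ?thesis .
qed

lemma obtain_distinct_if_card_ge_2:
  assumes "2 \<le> card X"
  obtains u v where "u \<in> X" "v \<in> X" "u \<noteq> v"
proof -
  from assms have "finite X" "\<not> card X \<le> Suc 0"
    using card.infinite by fastforce+
  then show ?thesis
    using that card_le_Suc0_iff_eq by blast
qed

lemma strong_subgraph_meets_cut:
  assumes "strong_subgraph_containing V A S W B" "u \<in> S" "v \<in> S" "(u, v) \<notin> (A - F)\<^sup>*"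
  shows "B \<inter> F \<noteq> {}"
proof
  assume "B \<inter> F = {}"
  with assms(1) have "B \<subseteq> A - F" unfolding strong_subgraph_containing_def by auto
  moreover from assms(1-3) have "(u, v) \<in> B\<^sup>*"
    unfolding strong_subgraph_containing_def strong_def by blast
  ultimately show False using assms(4) rtrancl_mono by blast
qed

definition strong_packing_sizes :: "'a set \<Rightarrow> ('a \<times> 'a) set \<Rightarrow> 'a set \<Rightarrow> nat set" where
  "strong_packing_sizes V A S = {m. \<exists>H :: nat \<Rightarrow> 'a set \<times> ('a \<times> 'a) set.
      (\<forall>i<m. strong_subgraph_containing V A S (fst (H i)) (snd (H i))) \<and>
      (\<forall>i<m. \<forall>j<m. i \<noteq> j \<longrightarrow> snd (H i) \<inter> snd (H j) = {})}"

lemma lambda_S_eq_Max: "lambda_S V A S = Max (strong_packing_sizes V A S)"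
  unfolding lambda_S_def strong_packing_sizes_def ..

lemma strong_packing_size_le_cut:
  assumes "m \<in> strong_packing_sizes V A S" "finite F"
    and "u \<in> S" "v \<in> S" "(u, v) \<notin> (A - F)\<^sup>*"
  shows "m \<le> card F"
proof -
  from assms(1) obtain H where
    subgraphs: "\<forall>i<m. strong_subgraph_containing V A S (fst (H i)) (snd (H i))" and
    disjoint: "\<forall>i<m. \<forall>j<m. i \<noteq> j \<longrightarrow> snd (H i) \<inter> snd (H j) = {}"
    unfolding strong_packing_sizes_def by blast
  show ?thesis
  proof (rule card_ge_if_disjoint_family_meets[where B = "snd \<circ> H"])
    show "(snd \<circ> H) i \<inter> F \<noteq> {}" if "i < m" for i
      using strong_subgraph_meets_cut[OF subgraphs[rule_format, OF that] assms(3-5)] by simp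
  qed (use assms(2) disjoint in auto)
qed

lemma lambda_S_le_cut:
  assumes "finite F" "u \<in> S" "v \<in> S" "(u, v) \<notin> (A - F)\<^sup>*"
  shows "lambda_S V A S \<le> card F"
proof -
  have bounded: "strong_packing_sizes V A S \<subseteq> {..card F}"
    using strong_packing_size_le_cut[OF _ assms] by auto
  have "0 \<in> strong_packing_sizes V A S"
    unfolding strong_packing_sizes_def by auto
  with bounded show ?thesis
    unfolding lambda_S_eq_Max by (subst Max_le_iff) (auto intro: finite_subset)
qed

text \<open>Two distinct vertices in S are needed for the Max to be meaningful: otherwise the
  single-vertex subgraph without arcs could be repeated arbitrarily often.\<close>

lemma lambda_S_ge_packing_size:
  assumes "m \<in> strong_packing_sizes V A S" "finite A" "u \<in> S" "v \<in> S" "u \<noteq> v"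
  shows "m \<le> lambda_S V A S"
proof -
  have "strong_packing_sizes V A S \<subseteq> {..card A}"
    using strong_packing_size_le_cut[where F = A] assms by auto
  then show ?thesis
    unfolding lambda_S_eq_Max using assms(1) by (auto intro: Max_ge finite_subset)
qed

lemma lambda_S_ge_1_if_strong:
  assumes "strong V A" "A \<subseteq> V \<times> V" "finite A" "S \<subseteq> V" "u \<in> S" "v \<in> S" "u \<noteq> v"
  shows "1 \<le> lambda_S V A S"
proof (rule lambda_S_ge_packing_size[OF _ assms(3,5-7)])
  have "strong_subgraph_containing V A S V A"
    using assms(1,2,4) unfolding strong_subgraph_containing_def by blast
  then show "1 \<in> strong_packing_sizes V A S"
    unfolding strong_packing_sizes_def by (intro CollectI exI[of _ "\<lambda>_. (V, A)"]) simp
qed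

lemma lambda_k_eq_Min_image:
  "lambda_k V A k = Min (lambda_S V A ` {S. S \<subseteq> V \<and> card S = k})"
  unfolding lambda_k_def by (rule arg_cong[where f = Min]) blast

lemma lambda_k_le_lambda_S:
  assumes "finite V" "S \<subseteq> V" "card S = k"
  shows "lambda_k V A k \<le> lambda_S V A S"
  unfolding lambda_k_eq_Min_image using assms by (intro Min_le) auto

lemma lambda_k_geI:
  assumes "finite V" "k \<le> card V" "\<And>S. S \<subseteq> V \<Longrightarrow> card S = k \<Longrightarrow> c \<le> lambda_S V A S"
  shows "c \<le> lambda_k V A k"
proof -
  obtain S where "S \<subseteq> V" "card S = k"
    using obtain_subset_with_card_n[OF assms(2)] by metis
  then show ?thesis
    unfolding lambda_k_eq_Min_image using assms by (subst Min_ge_iff) auto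
qed

lemma strong_lambda_k_ge_1:
  assumes "digraph V A" "strong V A" "2 \<le> k" "k \<le> card V"
  shows "1 \<le> lambda_k V A k"
proof (rule lambda_k_geI)
  from assms(1) show "finite V" unfolding digraph_def by blast
  fix S assume S: "S \<subseteq> V" "card S = k"
  with assms(3) have "2 \<le> card S" by simp
  then obtain u v where uv: "u \<in> S" "v \<in> S" "u \<noteq> v"
    by (rule obtain_distinct_if_card_ge_2)
  have "A \<subseteq> V \<times> V" using assms(1) unfolding digraph_def by blast
  from assms(2) this digraph_finite_arcs[OF assms(1)] S(1) uv show "1 \<le> lambda_S V A S"
    by (rule lambda_S_ge_1_if_strong)
qed fact

lemma arc_strong_conn_eq_Min_image:
  "arc_strong_conn V A = Min (card ` {F. F \<subseteq> A \<and> \<not> strong V (A - F)})"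
  unfolding arc_strong_conn_def by (rule arg_cong[where f = Min]) blast

lemma arc_strong_conn_le:
  assumes "finite A" "F \<subseteq> A" "\<not> strong V (A - F)"
  shows "arc_strong_conn V A \<le> card F"
  unfolding arc_strong_conn_eq_Min_image using assms by (intro Min_le) auto

lemma arc_strong_conn_attained:
  assumes "finite A" "u \<in> V" "v \<in> V" "u \<noteq> v"
  obtains F where "F \<subseteq> A" "\<not> strong V (A - F)" "card F = arc_strong_conn V A"
proof -
  let ?cuts = "{F. F \<subseteq> A \<and> \<not> strong V (A - F)}"
  have "A \<in> ?cuts"
    using assms(2-4) unfolding strong_def by auto
  then have "Min (card ` ?cuts) \<in> card ` ?cuts"
    using \<open>finite A\<close> by (intro Min_in) auto
  then obtain F where F: "Min (card ` ?cuts) = card F" "F \<in> ?cuts"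
    by (rule imageE)
  show ?thesis
    by (rule that[of F]) (use F in \<open>simp_all add: arc_strong_conn_eq_Min_image\<close>)
qed

lemma lambda_k_le_arc_strong_conn:
  assumes "digraph V A" "2 \<le> k" "k \<le> card V"
  shows "lambda_k V A k \<le> arc_strong_conn V A"
proof -
  have "finite V" "finite A"
    using assms(1) digraph_finite_arcs unfolding digraph_def by auto
  from assms(2,3) have "2 \<le> card V" by simp
  then obtain u v where "u \<in> V" "v \<in> V" "u \<noteq> v"
    by (rule obtain_distinct_if_card_ge_2)
  with \<open>finite A\<close> obtain F where F: "F \<subseteq> A" "\<not> strong V (A - F)" "card F = arc_strong_conn V A"
    by (rule arc_strong_conn_attained)
  then obtain x y where xy: "x \<in> V" "y \<in> V" "(x, y) \<notin> (A - F)\<^sup>*"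
    unfolding strong_def by blast
  then have "card {x, y} \<le> k"
    using assms(2) by (cases "x = y") auto
  with xy assms(3) \<open>finite V\<close> obtain S where S: "{x, y} \<subseteq> S" "S \<subseteq> V" "card S = k"
    using exists_subset_between[of "{x, y}" k V] by auto
  have "lambda_k V A k \<le> lambda_S V A S"
    using \<open>finite V\<close> S(2,3) by (rule lambda_k_le_lambda_S)
  also have "\<dots> \<le> card F"
    using S(1) xy(3) F(1) \<open>finite A\<close> by (intro lambda_S_le_cut) (auto intro: finite_subset)
  finally show ?thesis using F(3) by simp
qed

definition cycle_arcs :: "nat \<Rightarrow> (nat \<times> nat) set" where
  "cycle_arcs n = {(i, Suc i) | i. Suc i < n} \<union> {(n - 1, 0)}"

lemma cycle_digraph: "2 \<le> n \<Longrightarrow> digraph {..<n} (cycle_arcs n)"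
  unfolding digraph_def cycle_arcs_def by auto

lemma cycle_path_upwards: "i \<le> j \<Longrightarrow> j < n \<Longrightarrow> (i, j) \<in> (cycle_arcs n)\<^sup>*"
proof (induction j rule: dec_induct)
  case (step j)
  then have "(j, Suc j) \<in> cycle_arcs n" unfolding cycle_arcs_def by auto
  with step show ?case by (meson Suc_lessD rtrancl_into_rtrancl)
qed simp

lemma cycle_strong: "strong {..<n} (cycle_arcs n)"
  unfolding strong_def
proof (intro ballI)
  fix u v assume u: "u \<in> {..<n}" and v: "v \<in> {..<n}"
  show "(u, v) \<in> (cycle_arcs n)\<^sup>*"
  proof (cases "u \<le> v")
    case True
    then show ?thesis using cycle_path_upwards v by simp
  next
    case False
    have "(u, n - 1) \<in> (cycle_arcs n)\<^sup>*" using cycle_path_upwards u by simp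
    moreover have "(n - 1, 0) \<in> cycle_arcs n" unfolding cycle_arcs_def by simp
    moreover have "(0, v) \<in> (cycle_arcs n)\<^sup>*" using cycle_path_upwards v by simp
    ultimately show ?thesis by (meson rtrancl_into_rtrancl rtrancl_trans)
  qed
qed

lemma cycle_arc_strong_conn_le_1:
  assumes "2 \<le> n"
  shows "arc_strong_conn {..<n} (cycle_arcs n) \<le> 1"
proof -
  let ?F = "{(0::nat, 1::nat)}"
  have no_arc_out_of_0: "(0, w) \<notin> cycle_arcs n - ?F" for w
    using assms unfolding cycle_arcs_def by auto
  have "(0, 1) \<notin> (cycle_arcs n - ?F)\<^sup>*"
    by (metis converse_rtranclE no_arc_out_of_0 zero_neq_one)
  moreover have "0 \<in> {..<n}" "1 \<in> {..<n}" using assms by auto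
  ultimately have not_strong: "\<not> strong {..<n} (cycle_arcs n - ?F)"
    unfolding strong_def by blast
  have "?F \<subseteq> cycle_arcs n"
    using assms unfolding cycle_arcs_def by simp
  from digraph_finite_arcs[OF cycle_digraph[OF assms]] this not_strong
  have "arc_strong_conn {..<n} (cycle_arcs n) \<le> card ?F"
    by (rule arc_strong_conn_le)
  then show ?thesis by simp
qed

theorem theorem3p7:
  shows "(\<forall>(V :: 'a set) A k. digraph V A \<and> 2 \<le> k \<and> k \<le> card V \<longrightarrow>
            lambda_k V A k \<le> arc_strong_conn V A)
       \<and> (\<forall>n k. 2 \<le> k \<and> k \<le> n \<longrightarrow>
            (\<exists>(V :: nat set) A. digraph V A \<and> card V = n \<and> strong V A \<and>
               lambda_k V A k = arc_strong_conn V A))"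
proof (intro conjI allI impI)
  fix V :: "'a set" and A k
  assume "digraph V A \<and> 2 \<le> k \<and> k \<le> card V"
  then show "lambda_k V A k \<le> arc_strong_conn V A"
    using lambda_k_le_arc_strong_conn by blast
next
  fix n k :: nat
  assume k: "2 \<le> k \<and> k \<le> n"
  then have cycle: "digraph {..<n} (cycle_arcs n)"
    by (intro cycle_digraph) simp
  have "lambda_k {..<n} (cycle_arcs n) k \<le> arc_strong_conn {..<n} (cycle_arcs n)"
    using lambda_k_le_arc_strong_conn[OF cycle] k by simp
  moreover have "arc_strong_conn {..<n} (cycle_arcs n) \<le> 1"
    using k by (intro cycle_arc_strong_conn_le_1) simp
  moreover have "1 \<le> lambda_k {..<n} (cycle_arcs n) k"
    using strong_lambda_k_ge_1[OF cycle cycle_strong] k by simp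
  ultimately show "\<exists>(V :: nat set) A. digraph V A \<and> card V = n \<and> strong V A \<and>
      lambda_k V A k = arc_strong_conn V A"
    using cycle cycle_strong by (intro exI[of _ "{..<n}"] exI[of _ "cycle_arcs n"]) simp
qed

end
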